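(* Let $S \subseteq \mathbb{R}^n$ be nonempty, closed and convex, and let $F_i = f_i + g_i$, $i=1,\dots,m$, where each $f_i \colon S \to \mathbb{R}$ is continuously differentiable and each $g_i \colon S \to \mathbb{R}$ is convex. For $\ell>0$ define \[ w_\ell(x) := \max_{y \in S} \min_{i = 1,\dots,m} \left\{ \nabla f_i(x)^\top (x - y) + g_i(x) - g_i(y) - \frac{\ell}{2}\|x - y\|^2 \right\}, \quad x\in S. \] Let $\ell > 0$ and let $r$ be any scalar with $r \ge \ell$. Then \[ w_r(x) \le w_\ell(x) \le \frac{r}{\ell} w_r(x) \quad \text{for all } x \in S. \] *)

theory Defs
  imports "HOL-Analysis.Analysis"
begin

definition merit_w ::
  "(nat \<Rightarrow> 'a::euclidean_space \<Rightarrow> 'a) \<Rightarrow> (nat \<Rightarrow> 'a \<Rightarrow> real) \<Rightarrow> nat \<Rightarrow> 'a set \<Rightarrow> real \<Rightarrow> 'a \<Rightarrow> real"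
  where
  "merit_w gradf g m S l x =
     (SUP y\<in>S. Min ((\<lambda>i. gradf i x \<bullet> (x - y) + g i x - g i y - l / 2 * (norm (x - y))\<^sup>2) ` {1..m}))"

end

theory Submission
  imports Defs
begin

text \<open>Write \<open>\<phi>\<^sub>\<ell>(x, y)\<close> for the minimum over \<open>i\<close> inside the supremum defining \<open>w\<^sub>\<ell>(x)\<close>.
  Since \<open>\<phi>\<^sub>\<ell>(x, y)\<close> decreases in \<open>\<ell>\<close>, \<open>w\<^sub>r \<le> w\<^sub>\<ell>\<close>. Conversely, for \<open>y \<in> S\<close> put \<open>t = \<ell>/r\<close> and
  \<open>z = x + t (y - x) \<in> S\<close>: the linear term scales by \<open>t\<close>, the quadratic one by \<open>r t\<^sup>2 = \<ell> t\<close>, and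
  convexity gives \<open>g\<^sub>i(x) - g\<^sub>i(z) \<ge> t (g\<^sub>i(x) - g\<^sub>i(y))\<close>, so \<open>\<phi>\<^sub>r(x, z) \<ge> t \<phi>\<^sub>\<ell>(x, y)\<close>.
  Both suprema are finite because a convex function on a convex subset of \<open>\<real>\<^sup>n\<close> is bounded
  below by \<open>c - K \<parallel>y\<parallel>\<close>, which the quadratic penalty dominates.\<close>

lemma Min_image_mono:
  assumes "finite A" "\<And>i. i \<in> A \<Longrightarrow> f i \<le> h i"
  shows "Min (f ` A) \<le> Min (h ` A)"
proof (cases "A = {}")
  case False
  then show ?thesis using assms by (auto simp: Min_le_iff)
qed simp

lemma convex_on_bounded_above_near_rel_interior:
  fixes S :: "'a::euclidean_space set" and g :: "'a \<Rightarrow> real"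
  assumes "convex S" "S \<noteq> {}" "convex_on S g"
  obtains x0 e M where "x0 \<in> S" "e > 0" "\<forall>z \<in> ball x0 e \<inter> affine hull S. z \<in> S \<and> g z \<le> M"
proof -
  \<comment> \<open>The convex hull of an affine basis of \<open>S\<close> has the same affine hull as \<open>S\<close>, and \<open>g\<close> is
    bounded on it by its maximum at the finitely many vertices.\<close>
  obtain B where B: "B \<subseteq> S" "\<not> affine_dependent B" "affine hull S = affine hull B"
    using affine_basis_exists by blast
  have "finite B" using B(2) aff_independent_finite by blast
  define C where "C = convex hull B"
  have "C \<subseteq> S" unfolding C_def using B(1) assms(1) by (simp add: hull_minimal)
  have "C \<noteq> {}" using B assms(2) hull_subset[of S affine] by (auto simp: C_def)
  then obtain x0 where "x0 \<in> rel_interior C"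
    using rel_interior_eq_empty[of C] by (auto simp: C_def)
  then obtain e where e: "e > 0" "ball x0 e \<inter> affine hull C \<subseteq> C" "x0 \<in> C"
    using mem_rel_interior_ball by blast
  have "\<forall>z\<in>C. g z \<le> Max (g ` B)"
    unfolding C_def using convex_on_subset[OF assms(3) \<open>C \<subseteq> S\<close>] \<open>finite B\<close>
    by (intro convex_on_convex_hull_bound) (auto simp: C_def)
  moreover have "affine hull C = affine hull S" using B(3) by (simp add: C_def)
  ultimately show thesis
    using that[of x0 e "Max (g ` B)"] e \<open>C \<subseteq> S\<close> by blast
qed

lemma convex_on_lower_bound_from_local_upper_bound:
  fixes S :: "'a::euclidean_space set" and g :: "'a \<Rightarrow> real"
  assumes g: "convex_on S g" and "x0 \<in> S" "y \<in> S" "e > 0"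
    and bound: "\<forall>z \<in> ball x0 e \<inter> affine hull S. z \<in> S \<and> g z \<le> M"
  shows "g x0 - 2 * (M - g x0) / e * norm (y - x0) \<le> g y"
proof (cases "y = x0")
  case False
  define s where "s = e / (2 * norm (y - x0))"
  have "s > 0" using False \<open>e > 0\<close> by (simp add: s_def)
  \<comment> \<open>\<open>z\<close> lies on the ray from \<open>y\<close> through \<open>x0\<close>, at distance \<open>e/2\<close> beyond \<open>x0\<close>.\<close>
  define z where "z = (1 + s) *\<^sub>R x0 + (- s) *\<^sub>R y"
  have "z \<in> affine hull S"
    unfolding z_def using \<open>x0 \<in> S\<close> \<open>y \<in> S\<close> hull_subset[of S affine]
    by (intro mem_affine[OF affine_affine_hull]) auto
  moreover have "dist x0 z = e / 2"
  proof -
    have "x0 - z = s *\<^sub>R (y - x0)" by (simp add: z_def algebra_simps)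
    then show ?thesis using \<open>e > 0\<close> False by (simp add: dist_norm s_def)
  qed
  ultimately have "z \<in> S" "g z \<le> M" using bound \<open>e > 0\<close> by auto
  define t where "t = s / (1 + s)"
  have "0 \<le> t" "t \<le> 1" using \<open>s > 0\<close> by (auto simp: t_def)
  have "(1 - t) *\<^sub>R z + t *\<^sub>R y = (1 / (1 + s)) *\<^sub>R (z + s *\<^sub>R y)"
    using \<open>s > 0\<close> by (simp add: t_def scaleR_add_right field_simps)
  also have "\<dots> = x0"
    using \<open>s > 0\<close> by (simp add: z_def)
  finally have "x0 = (1 - t) *\<^sub>R z + t *\<^sub>R y" ..
  then have "g x0 \<le> (1 - t) * g z + t * g y"
    using convex_onD[OF g \<open>0 \<le> t\<close> \<open>t \<le> 1\<close> \<open>z \<in> S\<close> \<open>y \<in> S\<close>] by simp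
  also have "(1 - t) * g z + t * g y = (g z + s * g y) / (1 + s)"
    using \<open>s > 0\<close> by (simp add: t_def divide_simps)
  finally have "(1 + s) * g x0 \<le> M + s * g y"
    using \<open>s > 0\<close> \<open>g z \<le> M\<close> by (simp add: le_divide_eq mult.commute)
  then have "g x0 - (M - g x0) / s \<le> g y"
    using \<open>s > 0\<close> by (simp add: field_simps)
  moreover have "(M - g x0) / s = 2 * (M - g x0) / e * norm (y - x0)"
    using False \<open>e > 0\<close> by (simp add: s_def)
  ultimately show ?thesis by simp
qed simp

lemma convex_on_ge_linear_in_norm:
  fixes S :: "'a::euclidean_space set" and g :: "'a \<Rightarrow> real"
  assumes "convex S" "S \<noteq> {}" "convex_on S g"
  obtains c K where "K \<ge> 0" "\<forall>y\<in>S. c - K * norm y \<le> g y"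
proof -
  obtain x0 e M where x0: "x0 \<in> S" "e > 0"
    and bound: "\<forall>z \<in> ball x0 e \<inter> affine hull S. z \<in> S \<and> g z \<le> M"
    by (rule convex_on_bounded_above_near_rel_interior[OF assms])
  define K where "K = 2 * (M - g x0) / e"
  have "K \<ge> 0"
    using bound x0 hull_subset[of S affine] by (auto simp: K_def)
  have "g x0 - K * norm x0 - K * norm y \<le> g y" if "y \<in> S" for y
  proof -
    have "K * norm (y - x0) \<le> K * (norm y + norm x0)"
      using \<open>K \<ge> 0\<close> norm_triangle_ineq4[of y x0] by (intro mult_left_mono)
    moreover have "g x0 - K * norm (y - x0) \<le> g y"
      using convex_on_lower_bound_from_local_upper_bound[OF assms(3) x0(1) that x0(2) bound]
      by (simp add: K_def)
    ultimately show ?thesis by (simp add: algebra_simps)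
  qed
  then show thesis using that \<open>K \<ge> 0\<close> by blast
qed

definition merit_term ::
  "(nat \<Rightarrow> 'a::euclidean_space \<Rightarrow> 'a) \<Rightarrow> (nat \<Rightarrow> 'a \<Rightarrow> real) \<Rightarrow> real \<Rightarrow> 'a \<Rightarrow> 'a \<Rightarrow> nat \<Rightarrow> real"
  where "merit_term gradf g l x y i = gradf i x \<bullet> (x - y) + g i x - g i y - l / 2 * (norm (x - y))\<^sup>2"

definition merit_min ::
  "(nat \<Rightarrow> 'a::euclidean_space \<Rightarrow> 'a) \<Rightarrow> (nat \<Rightarrow> 'a \<Rightarrow> real) \<Rightarrow> nat \<Rightarrow> real \<Rightarrow> 'a \<Rightarrow> 'a \<Rightarrow> real"
  where "merit_min gradf g m l x y = Min (merit_term gradf g l x y ` {1..m})"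

lemma merit_w_eq_SUP_merit_min: "merit_w gradf g m S l x = (SUP y\<in>S. merit_min gradf g m l x y)"
  by (simp add: merit_w_def merit_min_def merit_term_def)

lemma merit_term_antimono:
  assumes "l \<le> r"
  shows "merit_term gradf g r x y i \<le> merit_term gradf g l x y i"
  using mult_right_mono[OF assms, of "(norm (x - y))\<^sup>2 / 2"] by (simp add: merit_term_def)

lemma merit_min_antimono:
  assumes "l \<le> r"
  shows "merit_min gradf g m r x y \<le> merit_min gradf g m l x y"
  unfolding merit_min_def using merit_term_antimono[OF assms] by (intro Min_image_mono) auto

lemma merit_term_scaled:
  assumes "convex_on S (g i)" "x \<in> S" "y \<in> S" "0 < l" "l \<le> r"
  defines "z \<equiv> (1 - l / r) *\<^sub>R x + (l / r) *\<^sub>R y"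
  shows "(l / r) * merit_term gradf g l x y i \<le> merit_term gradf g r x z i"
proof -
  define t where "t = l / r"
  have "0 \<le> t" "t \<le> 1" using assms(4,5) by (auto simp: t_def)
  have xz: "x - z = t *\<^sub>R (x - y)" by (simp add: z_def t_def algebra_simps)
  have "gradf i x \<bullet> (x - z) = t * (gradf i x \<bullet> (x - y))"
    unfolding xz by simp
  moreover have "r / 2 * (norm (x - z))\<^sup>2 = t * (l / 2 * (norm (x - y))\<^sup>2)"
    unfolding xz using assms(4,5) \<open>0 \<le> t\<close> by (simp add: t_def power_mult_distrib power2_eq_square mult_ac)
  moreover have "g i z \<le> (1 - t) * g i x + t * g i y"
    using convex_onD[OF assms(1) \<open>0 \<le> t\<close> \<open>t \<le> 1\<close> assms(2,3)] by (simp add: z_def t_def)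
  ultimately show ?thesis
    unfolding t_def[symmetric] merit_term_def by (simp add: algebra_simps)
qed

lemma merit_min_scaled:
  assumes "m \<ge> 1" "\<And>i. i \<in> {1..m} \<Longrightarrow> convex_on S (g i)" "x \<in> S" "y \<in> S" "0 < l" "l \<le> r"
  shows "(l / r) * merit_min gradf g m l x y
           \<le> merit_min gradf g m r x ((1 - l / r) *\<^sub>R x + (l / r) *\<^sub>R y)"
proof -
  have "0 \<le> l / r" using assms(5,6) by simp
  then have "mono ((*) (l / r))" by (intro monoI mult_left_mono)
  then have "(l / r) * merit_min gradf g m l x y = Min ((*) (l / r) ` merit_term gradf g l x y ` {1..m})"
    unfolding merit_min_def by (rule mono_Min_commute) (use assms(1) in auto)
  also have "\<dots> = Min ((\<lambda>i. (l / r) * merit_term gradf g l x y i) ` {1..m})"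
    by (simp add: image_image)
  also have "\<dots> \<le> merit_min gradf g m r x ((1 - l / r) *\<^sub>R x + (l / r) *\<^sub>R y)"
    unfolding merit_min_def using merit_term_scaled[OF assms(2) assms(3-6)]
    by (intro Min_image_mono) auto
  finally show ?thesis .
qed

lemma bdd_above_merit_term:
  assumes low: "\<forall>y\<in>S. c - K * norm y \<le> g i y" and "K \<ge> 0" "l > 0"
  shows "bdd_above ((\<lambda>y. merit_term gradf g l x y i) ` S)"
proof (rule bdd_aboveI2)
  fix y assume "y \<in> S"
  define D where "D = norm (x - y)"
  define b where "b = norm (gradf i x) + K"
  have "gradf i x \<bullet> (x - y) \<le> norm (gradf i x) * D"
    unfolding D_def by (rule norm_cauchy_schwarz)
  moreover have "K * norm y \<le> K * (norm x + D)"
    using \<open>K \<ge> 0\<close> norm_triangle_ineq3[of x y] unfolding D_def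
    by (intro mult_left_mono) (auto simp: norm_minus_commute)
  moreover have "b * D - l / 2 * D\<^sup>2 \<le> b\<^sup>2 / (2 * l)"
  proof -
    have "0 \<le> (l * D - b)\<^sup>2" by simp
    then have "2 * l * (b * D - l / 2 * D\<^sup>2) \<le> b\<^sup>2" by (simp add: power2_eq_square algebra_simps)
    then show ?thesis using \<open>l > 0\<close> by (simp add: le_divide_eq mult.commute)
  qed
  ultimately show "merit_term gradf g l x y i \<le> g i x - c + K * norm x + b\<^sup>2 / (2 * l)"
    using bspec[OF low \<open>y \<in> S\<close>] unfolding merit_term_def D_def[symmetric] b_def
    by (simp add: algebra_simps)
qed

lemma bdd_above_merit_min:
  fixes S :: "'a::euclidean_space set"
  assumes "convex S" "S \<noteq> {}" "i \<in> {1..m}" "convex_on S (g i)" "l > 0"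
  shows "bdd_above (merit_min gradf g m l x ` S)"
proof -
  obtain c K where "K \<ge> 0" "\<forall>y\<in>S. c - K * norm y \<le> g i y"
    by (rule convex_on_ge_linear_in_norm[OF assms(1,2,4)])
  then obtain B where B: "\<And>y. y \<in> S \<Longrightarrow> merit_term gradf g l x y i \<le> B"
    using bdd_above_merit_term[of S c K g i l gradf x] \<open>l > 0\<close> by (auto simp: bdd_above_def)
  have "merit_min gradf g m l x y \<le> merit_term gradf g l x y i" for y
    unfolding merit_min_def using assms(3) by simp
  then show ?thesis using B by (intro bdd_aboveI2[where M = B]) (meson order_trans)
qed

lemma merit_w_antimono:
  fixes S :: "'a::euclidean_space set"
  assumes "convex S" "S \<noteq> {}" "m \<ge> 1" "\<And>i. i \<in> {1..m} \<Longrightarrow> convex_on S (g i)" "0 < l" "l \<le> r"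
  shows "merit_w gradf g m S r x \<le> merit_w gradf g m S l x"
  unfolding merit_w_eq_SUP_merit_min
proof (rule cSUP_mono[OF \<open>S \<noteq> {}\<close>])
  show "bdd_above (merit_min gradf g m l x ` S)"
    using assms by (intro bdd_above_merit_min[of S 1]) auto
  show "\<exists>y'\<in>S. merit_min gradf g m r x y \<le> merit_min gradf g m l x y'" if "y \<in> S" for y
    using that merit_min_antimono[OF \<open>l \<le> r\<close>] by blast
qed

lemma merit_w_le_scaled:
  fixes S :: "'a::euclidean_space set"
  assumes "convex S" "S \<noteq> {}" "m \<ge> 1" "\<And>i. i \<in> {1..m} \<Longrightarrow> convex_on S (g i)" "0 < l" "l \<le> r"
    and "x \<in> S"
  shows "merit_w gradf g m S l x \<le> (r / l) * merit_w gradf g m S r x"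
  unfolding merit_w_eq_SUP_merit_min
proof (rule cSUP_least[OF \<open>S \<noteq> {}\<close>])
  fix y assume "y \<in> S"
  define z where "z = (1 - l / r) *\<^sub>R x + (l / r) *\<^sub>R y"
  have "z \<in> S"
    using convexD[OF \<open>convex S\<close> \<open>x \<in> S\<close> \<open>y \<in> S\<close>, of "1 - l / r" "l / r"] assms(5,6)
    by (simp add: z_def)
  have "(l / r) * merit_min gradf g m l x y \<le> merit_min gradf g m r x z"
    unfolding z_def by (rule merit_min_scaled[OF assms(3,4,7) \<open>y \<in> S\<close> assms(5,6)])
  then have "merit_min gradf g m l x y \<le> (r / l) * merit_min gradf g m r x z"
    using assms(5,6) by (simp add: field_simps)
  also have "\<dots> \<le> (r / l) * (SUP y\<in>S. merit_min gradf g m r x y)"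
    using assms \<open>z \<in> S\<close>
    by (intro mult_left_mono cSUP_upper bdd_above_merit_min[of S 1]) auto
  finally show "merit_min gradf g m l x y \<le> (r / l) * (SUP y\<in>S. merit_min gradf g m r x y)" .
qed

theorem theorem4p2:
  fixes S U :: "'a::euclidean_space set"
    and f g :: "nat \<Rightarrow> 'a \<Rightarrow> real"
    and gradf :: "nat \<Rightarrow> 'a \<Rightarrow> 'a"
    and m :: nat and l r :: real
  assumes "S \<noteq> {}" and "closed S" and "convex S"
    and "m \<ge> 1"
    and "open U" and "S \<subseteq> U"
    and "\<And>i x. i \<in> {1..m} \<Longrightarrow> x \<in> U \<Longrightarrow> (f i has_derivative (\<lambda>h. gradf i x \<bullet> h)) (at x)"
    and "\<And>i. i \<in> {1..m} \<Longrightarrow> continuous_on U (gradf i)"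
    and "\<And>i. i \<in> {1..m} \<Longrightarrow> convex_on S (g i)"
    and "l > 0" and "r \<ge> l"
  shows "\<forall>x\<in>S. merit_w gradf g m S r x \<le> merit_w gradf g m S l x
               \<and> merit_w gradf g m S l x \<le> (r / l) * merit_w gradf g m S r x"
  using assms(1,3,4,9-11) by (intro ballI conjI merit_w_antimono merit_w_le_scaled)

end
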